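(* Write $M=\{f=1\}$ and $M^*=\{f^*=1\}$ for positively 1-homogeneous functions $f,f^*:\mathbb{R}^{2d}\to\mathbb{R}$. For a point $x$ in the exterior of both $M$ and $M^*$ we have $-n_+(x)=R^*\left(\frac{x}{f^*(x)}\right)$ and $-n_-(x)=R^*\left(\frac{-x}{f^*(-x)}\right)$.
   Context: Work in $\mathbb{R}^{2d}$ with its standard symplectic form $\omega$. Let $M\subset\mathbb{R}^{2d}$ be a smooth hypersurface bounding a quadratically convex domain containing the origin in its interior. For $x\in M$, $R(x)$ is the unique vector with $\omega(v,R(x))=0$ for all $v\in T_xM$ and $\omega(x,R(x))=1$ (the Reeb vector field); $M^*=R(M)$ is the symplectic polar of $M$, and $R^*$ is the corresponding Reeb map for $M^*$ (defined in the same way with $M^*$ in place of $M$). Write $a\sim b$ if the vectors $a,b$ are proportional with a positive coefficient. For $x$ in the exterior of $M$, $n_-(x)\in M$ and $n_+(x)\in M$ denote the unique points with $R(n_-(x))\sim -x$ and $R(n_+(x))\sim x$ (explicitly $n_\pm(x)=G^{-1}(\mp Jx/|x|)$, where $G$ is the outward normal Gauss map of $M$ and $J$ is multiplication by $\sqrt{-1}$ under $\mathbb{R}^{2d}=\mathbb{C}^d$). It is known that $R^*\circ R=-\mathrm{id}_M$. *)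

theory Defs
  imports "HOL-Analysis.Analysis"
begin

text \<open>Ambient space: R^{2d} identified with C^d, realised as the type complex^'d
  (a euclidean space whose inner product is the real part of the Hermitian product).\<close>

definition cJ :: "complex ^ 'd \<Rightarrow> complex ^ 'd" where
  "cJ x = (\<chi> i. \<i> * (x $ i))"

text \<open>Standard symplectic form: omega(u,v) = <Ju, v>  (= sum dx_j /\ dy_j).\<close>
definition omega :: "complex ^ 'd \<Rightarrow> complex ^ 'd \<Rightarrow> real" where
  "omega u v = inner (cJ u) v"

definition pos_prop :: "'a::real_vector \<Rightarrow> 'a \<Rightarrow> bool" where
  "pos_prop a b \<longleftrightarrow> (\<exists>c>0. a = c *\<^sub>R b)"

definition tangent_space :: "'a::real_normed_vector set \<Rightarrow> 'a \<Rightarrow> 'a set" where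
  "tangent_space S x = {v. \<exists>\<gamma> e. e > 0 \<and> (\<forall>t\<in>{-e<..<e}. \<gamma> t \<in> S) \<and> \<gamma> 0 = x
        \<and> (\<gamma> has_vector_derivative v) (at 0)}"

definition reeb :: "(complex ^ 'd) set \<Rightarrow> complex ^ 'd \<Rightarrow> complex ^ 'd" where
  "reeb S x = (THE r. (\<forall>v\<in>tangent_space S x. omega v r = 0) \<and> omega x r = 1)"

definition n_plus :: "(complex ^ 'd) set \<Rightarrow> complex ^ 'd \<Rightarrow> complex ^ 'd" where
  "n_plus M x = (THE p. p \<in> M \<and> pos_prop (reeb M p) x)"

definition n_minus :: "(complex ^ 'd) set \<Rightarrow> complex ^ 'd \<Rightarrow> complex ^ 'd" where
  "n_minus M x = (THE p. p \<in> M \<and> pos_prop (reeb M p) (- x))"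

coinductive smooth_on :: "'a::euclidean_space set \<Rightarrow> ('a \<Rightarrow> real) \<Rightarrow> bool" where
  "\<lbrakk> continuous_on S f; \<forall>x\<in>S. f differentiable (at x);
     \<forall>v. smooth_on S (\<lambda>x. frechet_derivative f (at x) v) \<rbrakk> \<Longrightarrow> smooth_on S f"

definition hess :: "('a::euclidean_space \<Rightarrow> real) \<Rightarrow> 'a \<Rightarrow> 'a \<Rightarrow> real" where
  "hess f x v = frechet_derivative (\<lambda>y. frechet_derivative f (at y) v) (at x) v"

text \<open>f is the gauge (positively 1-homogeneous, positive off 0) of a smooth
  quadratically convex hypersurface {f = 1} bounding a domain containing 0 in its
  interior: f smooth away from 0 and its Hessian is positive definite on the tangent
  spaces of the level set {f = 1} (i.e. the second fundamental form is positive definite).\<close>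
definition pos_hom1 :: "('a::real_vector \<Rightarrow> real) \<Rightarrow> bool" where
  "pos_hom1 f \<longleftrightarrow> (\<forall>t>0. \<forall>x. f (t *\<^sub>R x) = t * f x)"

definition qconvex_gauge :: "('a::euclidean_space \<Rightarrow> real) \<Rightarrow> bool" where
  "qconvex_gauge f \<longleftrightarrow> pos_hom1 f \<and> (\<forall>x. x \<noteq> 0 \<longrightarrow> f x > 0) \<and> smooth_on (- {0}) f
     \<and> (\<forall>x v. f x = 1 \<and> v \<noteq> 0 \<and> frechet_derivative f (at x) v = 0 \<longrightarrow> hess f x v > 0)"

end

theory Submission
  imports Defs
begin

text \<open>
  On \<open>M = {f = 1}\<close> the Reeb vector is
  \<open>R q = J (\<nabla>f q)\<close>, so \<open>\<omega>(R q, p) = - Df q p\<close>. Convexity gives \<open>Df q p \<le> f p\<close>; hence for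
  \<open>p \<in> M\<close> the linear function \<open>\<omega>(-, p)\<close> attains its minimum on \<open>M* = R(M)\<close> at \<open>R p\<close>, so \<open>-p\<close>
  is \<open>\<omega>\<close>-orthogonal to the tangent space of \<open>M*\<close> at \<open>R p\<close> and \<open>\<omega>(R p, -p) = 1\<close>.
  Positive definiteness of the Hessian of \<open>f\<close> on \<open>ker (Df p)\<close> makes \<open>-p\<close> the only such vector,
  i.e. \<open>R*(R p) = -p\<close>. If \<open>f*(z) > 0\<close>, the point \<open>z / f*(z)\<close> of \<open>M*\<close> is \<open>R p\<close> for a unique
  \<open>p \<in> M\<close>, and this \<open>p\<close> is \<open>n\<^sub>+(z)\<close>; so \<open>R*(z / f*(z)) = -n\<^sub>+(z)\<close>. The second identity is the
  first one for \<open>-x\<close>, as \<open>n\<^sub>-(x) = n\<^sub>+(-x)\<close>; here \<open>f*(-x) > 0\<close> because every ray meets \<open>M*\<close>: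
  maximising \<open>\<langle>w, -\<rangle>\<close> over the compact set \<open>M\<close> shows that every \<open>w \<noteq> 0\<close> is a positive
  multiple of some \<open>\<nabla>f q\<close> with \<open>q \<in> M\<close>.
\<close>

lemma cJ_scaleR: "cJ (c *\<^sub>R a) = c *\<^sub>R cJ a"
  unfolding cJ_def by (simp add: vec_eq_iff scaleR_conv_of_real)

lemma cJ_minus: "cJ (- a) = - cJ a"
  unfolding cJ_def by (simp add: vec_eq_iff)

lemma cJ_cJ: "cJ (cJ a) = - a"
  unfolding cJ_def by (simp add: vec_eq_iff)

lemma cJ_eq_0_iff: "cJ a = 0 \<longleftrightarrow> a = 0"
  unfolding cJ_def by (simp add: vec_eq_iff)

lemma inner_cJ_cJ: "cJ a \<bullet> cJ b = a \<bullet> b"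
  unfolding cJ_def inner_vec_def by (simp add: inner_complex_def algebra_simps)

lemma omega_conv_inner: "omega u v = - (u \<bullet> cJ v)"
  by (metis cJ_cJ inner_cJ_cJ inner_minus_left omega_def)

lemma bounded_linear_cJ: "bounded_linear cJ"
  by (intro linear_conv_bounded_linear[THEN iffD1] linearI)
     (simp_all add: cJ_def cJ_scaleR vec_eq_iff distrib_left)

lemma smooth_onD:
  assumes "smooth_on S f"
  shows "continuous_on S f" "\<And>x. x \<in> S \<Longrightarrow> f differentiable (at x)"
    "\<And>v. smooth_on S (\<lambda>x. frechet_derivative f (at x) v)"
  using assms by (cases rule: smooth_on.cases, auto)+

lemma orthogonal_kernel_imp_multiple:
  fixes g q w :: "'a::real_inner"
  assumes gq: "g \<bullet> q = 1" and ker: "\<And>v. g \<bullet> v = 0 \<Longrightarrow> v \<bullet> w = 0"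
  shows "w = (q \<bullet> w) *\<^sub>R g"
proof -
  have "z \<bullet> (w - (q \<bullet> w) *\<^sub>R g) = 0" for z
  proof -
    have "(z - (g \<bullet> z) *\<^sub>R q) \<bullet> w = 0"
      using gq by (intro ker) (simp add: inner_diff_right)
    then show ?thesis by (simp add: inner_diff_left inner_diff_right inner_commute)
  qed
  then show ?thesis by (metis eq_iff_diff_eq_0 inner_eq_zero_iff)
qed

lemma min_linear_vanishes_on_tangent_space:
  fixes \<phi> :: "'a::real_normed_vector \<Rightarrow> real"
  assumes \<phi>: "bounded_linear \<phi>" and v: "v \<in> tangent_space S x"
    and min: "\<And>y. y \<in> S \<Longrightarrow> \<phi> x \<le> \<phi> y"
  shows "\<phi> v = 0"
proof -
  obtain \<gamma> e where \<gamma>: "e > 0" "\<forall>t\<in>{-e<..<e}. \<gamma> t \<in> S" "\<gamma> 0 = x"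
    "(\<gamma> has_vector_derivative v) (at 0)"
    using v unfolding tangent_space_def by blast
  have "((\<lambda>t. \<phi> (\<gamma> t)) has_real_derivative \<phi> v) (at 0)"
    unfolding has_real_derivative_iff_has_vector_derivative
    by (rule bounded_linear.has_vector_derivative[OF \<phi> \<gamma>(4)])
  moreover have "\<forall>t. \<bar>0 - t\<bar> < e \<longrightarrow> \<phi> (\<gamma> 0) \<le> \<phi> (\<gamma> t)"
    using \<gamma>(2,3) min by (auto simp: abs_less_iff)
  ultimately show ?thesis
    using DERIV_local_min \<gamma>(1) by blast
qed

lemma tangent_spaceI:
  assumes "e > 0" "\<And>t. t \<in> {-e<..<e} \<Longrightarrow> \<gamma> t \<in> S" "\<gamma> 0 = x"
    and "(\<gamma> has_vector_derivative v) (at 0)"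
  shows "v \<in> tangent_space S x"
  unfolding tangent_space_def using assms by blast

lemma line_nonzero_near_0:
  fixes q u :: "'a::real_normed_vector"
  assumes q: "q \<noteq> 0"
  obtains e where "e > 0" "\<And>t. t \<in> {-e<..<e} \<Longrightarrow> q + t *\<^sub>R u \<noteq> 0"
proof
  have nu: "0 < norm u + 1" using norm_ge_zero[of u] by linarith
  define e where "e = norm q / (norm u + 1)"
  show "e > 0" unfolding e_def using q nu by simp
  fix t assume "t \<in> {-e<..<e}"
  then have "\<bar>t\<bar> < e" by auto
  have "norm (t *\<^sub>R u) \<le> \<bar>t\<bar> * (norm u + 1)" by (simp add: mult_left_mono)
  also have "\<dots> < e * (norm u + 1)"
    using \<open>\<bar>t\<bar> < e\<close> nu by (rule mult_strict_right_mono)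
  also have "\<dots> = norm q" using nu by (simp add: e_def)
  finally have "norm (t *\<^sub>R u) < norm q" .
  then show "q + t *\<^sub>R u \<noteq> 0" by (metis add.inverse_unique norm_minus_cancel order.irrefl)
qed

lemma pos_hom1_0:
  fixes g :: "'a::real_vector \<Rightarrow> real"
  assumes "pos_hom1 g"
  shows "g 0 = 0"
  using assms[unfolded pos_hom1_def, rule_format, of 2 0] by simp

lemma n_minus_eq_n_plus_uminus: "n_minus M x = n_plus M (- x)"
  unfolding n_minus_def n_plus_def ..

locale gauge =
  fixes f :: "complex ^ 'd \<Rightarrow> real"
  assumes qconvex: "qconvex_gauge f"
begin

definition Df where "Df y = frechet_derivative f (at y)"
definition D2f where "D2f y v = frechet_derivative (\<lambda>z. Df z v) (at y)"

lemma f_scaleR: "t > 0 \<Longrightarrow> f (t *\<^sub>R y) = t * f y"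
  using qconvex unfolding qconvex_gauge_def pos_hom1_def by blast

lemma f_0: "f 0 = 0"
  using qconvex pos_hom1_0 unfolding qconvex_gauge_def by blast

lemma f_pos: "y \<noteq> 0 \<Longrightarrow> f y > 0"
  using qconvex unfolding qconvex_gauge_def by blast

lemma f_nonneg: "f y \<ge> 0"
  using f_pos f_0 by (cases "y = 0") (auto intro: less_imp_le)

lemma smooth: "smooth_on (- {0}) f"
  using qconvex unfolding qconvex_gauge_def by blast

lemma continuous_on_f: "continuous_on (- {0}) f"
  using smooth_onD(1)[OF smooth] .

lemma D2f_pos: "f x = 1 \<Longrightarrow> v \<noteq> 0 \<Longrightarrow> Df x v = 0 \<Longrightarrow> D2f x v v > 0"
  using qconvex unfolding qconvex_gauge_def hess_def Df_def D2f_def by blast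

lemma has_derivative_Df: "y \<noteq> 0 \<Longrightarrow> (f has_derivative Df y) (at y)"
  unfolding Df_def using smooth_onD(2)[OF smooth] frechet_derivative_works by auto

lemma linear_Df: "y \<noteq> 0 \<Longrightarrow> linear (Df y)"
  using has_derivative_Df has_derivative_linear by blast

lemma has_derivative_D2f:
  assumes y: "y \<noteq> 0"
  shows "((\<lambda>z. Df z v) has_derivative D2f y v) (at y)"
proof -
  have "smooth_on (- {0}) (\<lambda>z. Df z v)"
    unfolding Df_def using smooth_onD(3)[OF smooth] .
  then have "(\<lambda>z. Df z v) differentiable (at y)"
    using smooth_onD(2) y by auto
  then show ?thesis
    unfolding D2f_def using frechet_derivative_works by auto
qed

lemma linear_D2f: "y \<noteq> 0 \<Longrightarrow> linear (D2f y v)"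
  using has_derivative_D2f has_derivative_linear by blast

lemma has_real_derivative_f_line:
  assumes "a + t *\<^sub>R u \<noteq> 0"
  shows "((\<lambda>s. f (a + s *\<^sub>R u)) has_real_derivative Df (a + t *\<^sub>R u) u) (at t)"
proof -
  have "((\<lambda>s. a + s *\<^sub>R u) has_derivative (\<lambda>h. h *\<^sub>R u)) (at t)"
    by (auto intro!: derivative_eq_intros)
  from has_derivative_compose[OF this has_derivative_Df[OF assms]] show ?thesis
    by (simp add: has_field_derivative_def linear_cmul[OF linear_Df[OF assms]] mult_commute_abs)
qed

lemma has_real_derivative_Df_line:
  assumes "a + t *\<^sub>R u \<noteq> 0"
  shows "((\<lambda>s. Df (a + s *\<^sub>R u) v) has_real_derivative D2f (a + t *\<^sub>R u) v u) (at t)"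
proof -
  have "((\<lambda>s. a + s *\<^sub>R u) has_derivative (\<lambda>h. h *\<^sub>R u)) (at t)"
    by (auto intro!: derivative_eq_intros)
  from has_derivative_compose[OF this has_derivative_D2f[OF assms, of v]] show ?thesis
    by (simp add: has_field_derivative_def linear_cmul[OF linear_D2f[OF assms]] mult_commute_abs)
qed

lemma Df_self:
  assumes y: "y \<noteq> 0"
  shows "Df y y = f y"
proof -
  have "((\<lambda>s. f (s *\<^sub>R y)) has_real_derivative Df y y) (at 1)"
    using has_real_derivative_f_line[of 0 1 y] y by simp
  moreover have "((\<lambda>s. f (s *\<^sub>R y)) has_real_derivative f y) (at 1)"
    by (rule has_field_derivative_transform_within_open[where S="{0<..}"])
       (auto intro!: derivative_eq_intros simp: f_scaleR)
  ultimately show ?thesis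
    by (rule DERIV_unique)
qed

lemma Df_scaleR:
  assumes y: "y \<noteq> 0" and t: "t > 0"
  shows "Df (t *\<^sub>R y) = Df y"
proof -
  have ty: "t *\<^sub>R y \<noteq> 0" using y t by simp
  have scale: "((\<lambda>z. t *\<^sub>R z) has_derivative (\<lambda>h. t *\<^sub>R h)) (at y)"
    by (auto intro!: derivative_eq_intros)
  note has_derivative_compose[OF scale has_derivative_Df[OF ty]]
  moreover have "((\<lambda>z. f (t *\<^sub>R z)) has_derivative (\<lambda>h. t * Df y h)) (at y)"
    using has_derivative_Df[OF y] by (auto intro!: derivative_eq_intros simp: f_scaleR t)
  ultimately have "Df (t *\<^sub>R y) (t *\<^sub>R h) = t * Df y h" for h
    using has_derivative_unique by metis
  then show ?thesis
    using t by (auto simp: linear_cmul[OF linear_Df[OF ty]])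
qed

lemma D2f_self_right:
  assumes y: "y \<noteq> 0"
  shows "D2f y v y = 0"
proof -
  have "((\<lambda>s. Df (s *\<^sub>R y) v) has_real_derivative D2f y v y) (at 1)"
    using has_real_derivative_Df_line[of 0 1 y] y by simp
  moreover have "((\<lambda>s. Df (s *\<^sub>R y) v) has_real_derivative 0) (at 1)"
    by (rule has_field_derivative_transform_within_open[where S="{0<..}"])
       (auto intro!: derivative_eq_intros simp: Df_scaleR y)
  ultimately show ?thesis
    by (rule DERIV_unique)
qed

lemma D2f_scaleR:
  assumes y: "y \<noteq> 0" and t: "t > 0"
  shows "D2f (t *\<^sub>R y) v u = D2f y v u / t"
proof -
  have ty: "t *\<^sub>R y \<noteq> 0" using y t by simp
  have scale: "((\<lambda>z. t *\<^sub>R z) has_derivative (\<lambda>h. t *\<^sub>R h)) (at y)"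
    by (auto intro!: derivative_eq_intros)
  note has_derivative_compose[OF scale has_derivative_D2f[OF ty]]
  moreover have "((\<lambda>z. Df (t *\<^sub>R z) v) has_derivative D2f y v) (at y)"
    by (rule has_derivative_transform_within_open[OF has_derivative_D2f[OF y], where s="- {0}"])
       (auto simp: Df_scaleR t y)
  ultimately have "D2f (t *\<^sub>R y) v (t *\<^sub>R u) = D2f y v u"
    using has_derivative_unique by metis
  then show ?thesis
    using t by (simp add: linear_cmul[OF linear_D2f[OF ty]] field_simps)
qed

lemma Df_componentwise: "y \<noteq> 0 \<Longrightarrow> Df y v = (\<Sum>b\<in>Basis. (v \<bullet> b) * Df y b)"
  using Linear_Algebra.linear_componentwise[OF linear_Df, of y v 1] by simp

lemma D2f_componentwise:
  assumes y: "y \<noteq> 0"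
  shows "D2f y v u = (\<Sum>b\<in>Basis. (v \<bullet> b) * D2f y b u)"
proof -
  have "((\<lambda>z. \<Sum>b\<in>Basis. (v \<bullet> b) * Df z b) has_derivative
      (\<lambda>h. \<Sum>b\<in>Basis. (v \<bullet> b) * D2f y b h)) (at y)"
    by (auto intro!: derivative_eq_intros has_derivative_D2f y)
  then have "((\<lambda>z. Df z v) has_derivative (\<lambda>h. \<Sum>b\<in>Basis. (v \<bullet> b) * D2f y b h)) (at y)"
    by (rule has_derivative_transform_within_open[where s="- {0}"]) (auto simp: y Df_componentwise[symmetric])
  from fun_cong[OF has_derivative_unique[OF has_derivative_D2f[OF y] this]] show ?thesis .
qed

lemma D2f_add_left:
  assumes "y \<noteq> 0"
  shows "D2f y (v + w) u = D2f y v u + D2f y w u"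
  unfolding D2f_componentwise[OF assms, of "v + w" u] D2f_componentwise[OF assms, of v u]
    D2f_componentwise[OF assms, of w u]
  by (simp add: inner_add_left distrib_right sum.distrib)

lemma D2f_scaleR_left:
  assumes "y \<noteq> 0"
  shows "D2f y (c *\<^sub>R v) u = c * D2f y v u"
  unfolding D2f_componentwise[OF assms, of "c *\<^sub>R v" u] D2f_componentwise[OF assms, of v u]
  by (simp add: sum_distrib_left mult.assoc)

text \<open>Differentiating the Euler identity \<open>f z = (\<Sum>b\<in>Basis. (z \<bullet> b) * Df z b)\<close>.\<close>
lemma D2f_self_left:
  assumes y: "y \<noteq> 0"
  shows "D2f y y u = 0"
proof -
  have "((\<lambda>z. \<Sum>b\<in>Basis. (z \<bullet> b) * Df z b) has_derivative
      (\<lambda>h. \<Sum>b\<in>Basis. (y \<bullet> b) * D2f y b h + (h \<bullet> b) * Df y b)) (at y)"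
    by (auto intro!: derivative_eq_intros has_derivative_D2f y)
  then have "(f has_derivative (\<lambda>h. \<Sum>b\<in>Basis. (y \<bullet> b) * D2f y b h + (h \<bullet> b) * Df y b)) (at y)"
    by (rule has_derivative_transform_within_open[where s="- {0}"])
       (auto simp: y Df_componentwise[symmetric] Df_self)
  from fun_cong[OF has_derivative_unique[OF has_derivative_Df[OF y] this], of u]
  show ?thesis
    using Df_componentwise[OF y, of u] D2f_componentwise[OF y, of y u] by (simp add: sum.distrib)
qed

text \<open>Split \<open>w\<close> into a radial part and a part \<open>u\<close> tangent to the level set of \<open>y\<close>;
  the radial part drops out and \<open>u\<close> is controlled by \<open>D2f_pos\<close> after rescaling \<open>y\<close>
  to \<open>f y = 1\<close>.\<close>
lemma D2f_nonneg:
  assumes y: "y \<noteq> 0"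
  shows "D2f y w w \<ge> 0"
proof -
  have fy: "f y > 0" using f_pos y .
  define a where "a = Df y w / f y"
  define u where "u = w - a *\<^sub>R y"
  have Du: "Df y u = 0"
    unfolding u_def using linear_diff[OF linear_Df[OF y]] linear_cmul[OF linear_Df[OF y]] Df_self[OF y] fy
    by (simp add: a_def)
  have w: "w = a *\<^sub>R y + u" unfolding u_def by simp
  have "D2f y w w = D2f y u w"
    by (subst (1) w) (simp add: D2f_add_left D2f_scaleR_left D2f_self_left y)
  also have "\<dots> = D2f y u u"
    by (subst (1) w) (simp add: linear_add[OF linear_D2f[OF y]] linear_cmul[OF linear_D2f[OF y]] D2f_self_right y)
  finally have "D2f y w w = D2f y u u" .
  define m where "m = (1 / f y) *\<^sub>R y"
  have m: "m \<noteq> 0" "f m = 1" "y = f y *\<^sub>R m"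
    using y fy by (simp_all add: m_def f_scaleR)
  have "D2f y u u = D2f m u u / f y"
    by (subst m(3)) (rule D2f_scaleR[OF m(1) fy])
  moreover have "Df m u = 0" using Du Df_scaleR[OF y, of "1 / f y"] fy by (simp add: m_def)
  then have "D2f m u u \<ge> 0"
    using D2f_pos[OF m(2)] linear_0[OF linear_D2f[OF m(1)]] by (cases "u = 0") (auto intro: less_imp_le)
  ultimately show ?thesis using \<open>D2f y w w = D2f y u u\<close> fy by simp
qed

text \<open>Convexity of \<open>f\<close> along the segment from \<open>q\<close> to \<open>p\<close>, which is only available if the segment
  avoids the singular point \<open>0\<close>; otherwise \<open>p\<close> is a nonpositive multiple of \<open>q\<close>.\<close>
lemma Df_le:
  assumes q: "q \<noteq> 0"
  shows "Df q p \<le> f p"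
proof (cases "\<exists>t\<in>{0..1}. q + t *\<^sub>R (p - q) = 0")
  case True
  then obtain t where t: "0 \<le> t" "t \<le> 1" "q + t *\<^sub>R (p - q) = 0" by auto
  have "t > 0" using t q by (cases "t = 0") auto
  have "Df q (q + t *\<^sub>R (p - q)) = 0"
    using t(3) linear_0[OF linear_Df[OF q]] by simp
  then have "t * Df q p = (t - 1) * f q"
    using linear_add[OF linear_Df[OF q]] linear_cmul[OF linear_Df[OF q]] linear_diff[OF linear_Df[OF q]]
      Df_self[OF q] by (simp add: algebra_simps)
  also have "\<dots> \<le> 0" using t(2) f_nonneg[of q] by (simp add: mult_nonpos_nonneg)
  finally have "Df q p \<le> 0" using \<open>t > 0\<close> by (simp add: mult_le_0_iff)
  then show ?thesis using f_nonneg[of p] by linarith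
next
  case False
  let ?c = "\<lambda>t. q + t *\<^sub>R (p - q)"
  have "Df (?c 0) (p - q) * (1 - 0) \<le> f (?c 1) - f (?c 0)"
  proof (rule f''_imp_f')
    fix t :: real assume "t \<in> {0..1}"
    then have "?c t \<noteq> 0" using False by blast
    then show "((\<lambda>s. f (?c s)) has_real_derivative Df (?c t) (p - q)) (at t)"
      and "((\<lambda>s. Df (?c s) (p - q)) has_real_derivative D2f (?c t) (p - q) (p - q)) (at t)"
      and "0 \<le> D2f (?c t) (p - q) (p - q)"
      by (rule has_real_derivative_f_line has_real_derivative_Df_line D2f_nonneg)+
  qed auto
  then show ?thesis
    using linear_diff[OF linear_Df[OF q]] Df_self[OF q] by simp
qed

definition level where "level = {y. f y = 1}"
definition polar where "polar = reeb level ` level"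
definition grad where "grad y = (\<Sum>b\<in>Basis. Df y b *\<^sub>R b)"
definition hess_vec where "hess_vec y u = (\<Sum>b\<in>Basis. D2f y b u *\<^sub>R b)"

lemma level_nonzero: "q \<in> level \<Longrightarrow> q \<noteq> 0"
  using f_0 by (auto simp: level_def)

lemma inner_grad: "y \<noteq> 0 \<Longrightarrow> v \<bullet> grad y = Df y v"
  by (simp add: grad_def inner_sum_right Df_componentwise[of y v] mult.commute)

lemma grad_scaleR: "y \<noteq> 0 \<Longrightarrow> t > 0 \<Longrightarrow> grad (t *\<^sub>R y) = grad y"
  by (simp add: grad_def Df_scaleR)

lemma inner_hess_vec: "y \<noteq> 0 \<Longrightarrow> v \<bullet> hess_vec y u = D2f y v u"
  by (simp add: hess_vec_def inner_sum_right D2f_componentwise[of y v u] mult.commute)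

lemma has_vector_derivative_grad:
  assumes "y \<noteq> 0"
  shows "((\<lambda>t. grad (y + t *\<^sub>R u)) has_vector_derivative hess_vec y u) (at 0)"
proof -
  have "((\<lambda>t. \<Sum>b\<in>Basis. Df (y + t *\<^sub>R u) b *\<^sub>R b) has_vector_derivative
         (\<Sum>b\<in>Basis. Df (y + 0 *\<^sub>R u) b *\<^sub>R 0 + D2f (y + 0 *\<^sub>R u) b u *\<^sub>R b)) (at 0)"
    using assms
    by (intro has_vector_derivative_sum has_vector_derivative_scaleR has_vector_derivative_const
        has_real_derivative_Df_line) simp
  then show ?thesis by (simp add: grad_def hess_vec_def)
qed

lemma radial_projection_level: "y \<noteq> 0 \<Longrightarrow> (1 / f y) *\<^sub>R y \<in> level"
  using f_pos[of y] by (simp add: level_def f_scaleR)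

lemma has_vector_derivative_radial_projection:
  assumes q: "q \<in> level" and u: "Df q u = 0"
  shows "((\<lambda>t. (1 / f (q + t *\<^sub>R u)) *\<^sub>R (q + t *\<^sub>R u)) has_vector_derivative u) (at 0)"
proof -
  have q0: "q \<noteq> 0" and fq: "f q = 1" using q level_nonzero by (auto simp: level_def)
  have "((\<lambda>t. 1 / f (q + t *\<^sub>R u)) has_real_derivative 0) (at 0)"
    using DERIV_inverse_fun[OF has_real_derivative_f_line[of q 0 u]] q0 u fq by (simp add: divide_inverse)
  moreover have "((\<lambda>t. q + t *\<^sub>R u) has_vector_derivative u) (at 0)"
    by (auto intro!: derivative_eq_intros)
  ultimately have "((\<lambda>t. (1 / f (q + t *\<^sub>R u)) *\<^sub>R (q + t *\<^sub>R u)) has_vector_derivative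
      ((1 / f (q + 0 *\<^sub>R u)) *\<^sub>R u + 0 *\<^sub>R (q + 0 *\<^sub>R u))) (at 0)"
    by (rule has_vector_derivative_scaleR)
  then show ?thesis by (simp add: fq)
qed

lemma tangent_space_level:
  assumes q: "q \<in> level"
  shows "tangent_space level q = {v. Df q v = 0}"
proof
  have q0: "q \<noteq> 0" using level_nonzero q .
  show "tangent_space level q \<subseteq> {v. Df q v = 0}"
  proof
    fix v assume "v \<in> tangent_space level q"
    then obtain \<gamma> e where \<gamma>: "e > 0" "\<forall>t\<in>{-e<..<e}. \<gamma> t \<in> level" "\<gamma> 0 = q"
      "(\<gamma> has_derivative (\<lambda>h. h *\<^sub>R v)) (at 0)"
      unfolding tangent_space_def has_vector_derivative_def by blast
    have "((\<lambda>t. f (\<gamma> t)) has_derivative (\<lambda>h. Df q (h *\<^sub>R v))) (at 0)"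
      using has_derivative_compose[OF \<gamma>(4)] has_derivative_Df[OF q0] \<gamma>(3) by simp
    moreover have "((\<lambda>t. f (\<gamma> t)) has_derivative (\<lambda>h. 0)) (at 0)"
      by (rule has_derivative_transform_within_open[OF has_derivative_const, where s="{-e<..<e}"])
         (use \<gamma> in \<open>auto simp: level_def\<close>)
    ultimately have "(\<lambda>h. Df q (h *\<^sub>R v)) = (\<lambda>h. 0)"
      by (rule has_derivative_unique)
    from fun_cong[OF this, of 1] show "v \<in> {v. Df q v = 0}" by simp
  qed
  show "{v. Df q v = 0} \<subseteq> tangent_space level q"
  proof
    fix v assume "v \<in> {v. Df q v = 0}"
    then have v: "Df q v = 0" by simp
    obtain e where "e > 0" and e: "\<And>t. t \<in> {-e<..<e} \<Longrightarrow> q + t *\<^sub>R v \<noteq> 0"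
      using line_nonzero_near_0[OF q0, where u = v] by blast
    show "v \<in> tangent_space level q"
    proof (rule tangent_spaceI[OF \<open>e > 0\<close>,
        where \<gamma> = "\<lambda>t. (1 / f (q + t *\<^sub>R v)) *\<^sub>R (q + t *\<^sub>R v)"])
      show "(1 / f (q + t *\<^sub>R v)) *\<^sub>R (q + t *\<^sub>R v) \<in> level" if "t \<in> {-e<..<e}" for t
        using radial_projection_level[OF e[OF that]] .
      show "(1 / f (q + 0 *\<^sub>R v)) *\<^sub>R (q + 0 *\<^sub>R v) = q"
        using q by (simp add: level_def)
    qed (rule has_vector_derivative_radial_projection[OF q v])
  qed
qed

lemma reeb_level:
  assumes q: "q \<in> level"
  shows "reeb level q = cJ (grad q)"
  unfolding reeb_def tangent_space_level[OF q]
proof (rule the_equality)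
  have q0: "q \<noteq> 0" and fq: "f q = 1" using q level_nonzero by (auto simp: level_def)
  have omega_grad: "omega v (cJ (grad q)) = Df q v" for v
    by (simp add: omega_def inner_cJ_cJ inner_grad q0)
  then show "(\<forall>v\<in>{v. Df q v = 0}. omega v (cJ (grad q)) = 0) \<and> omega q (cJ (grad q)) = 1"
    using Df_self[OF q0] fq by simp
  fix r assume r: "(\<forall>v\<in>{v. Df q v = 0}. omega v r = 0) \<and> omega q r = 1"
  have "cJ r = (q \<bullet> cJ r) *\<^sub>R grad q"
    by (rule orthogonal_kernel_imp_multiple)
       (use r in \<open>auto simp: inner_commute[of "grad q"] inner_grad q0 Df_self fq omega_conv_inner\<close>)
  also have "q \<bullet> cJ r = -1" using r by (simp add: omega_conv_inner)
  finally have "cJ (cJ r) = cJ (- grad q)" by simp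
  then show "r = cJ (grad q)" by (simp add: cJ_cJ cJ_minus)
qed

lemma omega_reeb_level: "q \<in> level \<Longrightarrow> omega (reeb level q) p = - Df q p"
  using level_nonzero[of q] by (simp add: reeb_level omega_def cJ_cJ inner_grad inner_commute[of _ p])

lemma omega_reeb_level_min:
  assumes p: "p \<in> level" and q: "q \<in> level"
  shows "omega (reeb level p) p \<le> omega (reeb level q) p"
proof -
  have "omega (reeb level p) p = - f p"
    using omega_reeb_level[OF p] Df_self[OF level_nonzero[OF p]] by simp
  also have "\<dots> \<le> - Df q p" using Df_le[OF level_nonzero[OF q]] by simp
  also have "\<dots> = omega (reeb level q) p" using omega_reeb_level[OF q] by simp
  finally show ?thesis .
qed

lemma omega_tangent_space_polar:
  assumes p: "p \<in> level" and v: "v \<in> tangent_space polar (reeb level p)"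
  shows "omega v p = 0"
proof (rule min_linear_vanishes_on_tangent_space[OF _ v])
  show "bounded_linear (\<lambda>y. omega y p)"
    unfolding omega_def by (rule bounded_linear_compose[OF bounded_linear_inner_left bounded_linear_cJ])
  show "omega (reeb level p) p \<le> omega y p" if "y \<in> polar" for y
    using that omega_reeb_level_min[OF p] by (auto simp: polar_def)
qed

lemma cJ_hess_vec_tangent_space_polar:
  assumes p: "p \<in> level" and u: "Df p u = 0"
  shows "cJ (hess_vec p u) \<in> tangent_space polar (reeb level p)"
proof -
  have p0: "p \<noteq> 0" using level_nonzero p .
  obtain e where "e > 0" and e: "\<And>t. t \<in> {-e<..<e} \<Longrightarrow> p + t *\<^sub>R u \<noteq> 0"
    using line_nonzero_near_0[OF p0, where u = u] by blast
  define \<gamma> where "\<gamma> t = cJ (grad (p + t *\<^sub>R u))" for t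
  have "\<gamma> t \<in> polar" if "t \<in> {-e<..<e}" for t
  proof -
    let ?y = "p + t *\<^sub>R u"
    have "\<gamma> t = reeb level ((1 / f ?y) *\<^sub>R ?y)"
      using reeb_level[OF radial_projection_level] grad_scaleR e[OF that] f_pos[OF e[OF that]]
      by (simp add: \<gamma>_def)
    then show ?thesis
      using radial_projection_level[OF e[OF that]] by (simp add: polar_def)
  qed
  moreover have "\<gamma> 0 = reeb level p" by (simp add: \<gamma>_def reeb_level p)
  moreover have "(\<gamma> has_vector_derivative cJ (hess_vec p u)) (at 0)"
    unfolding \<gamma>_def
    by (rule bounded_linear.has_vector_derivative[OF bounded_linear_cJ has_vector_derivative_grad[OF p0]])
  ultimately show ?thesis
    by (intro tangent_spaceI[OF \<open>e > 0\<close>])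
qed

text \<open>This is where quadratic convexity enters: a vector satisfying the Reeb conditions for the
  polar at \<open>reeb level p\<close> differs from \<open>- p\<close> by a vector \<open>s\<close> with \<open>Df p s = 0\<close> and
  \<open>D2f p s s = 0\<close>.\<close>
lemma reeb_polar_reeb_level:
  assumes p: "p \<in> level"
  shows "reeb polar (reeb level p) = - p"
  unfolding reeb_def[of polar]
proof (rule the_equality)
  have p0: "p \<noteq> 0" and fp: "f p = 1" using p level_nonzero by (auto simp: level_def)
  show "(\<forall>v\<in>tangent_space polar (reeb level p). omega v (- p) = 0) \<and> omega (reeb level p) (- p) = 1"
    using omega_tangent_space_polar[OF p] omega_reeb_level[OF p] Df_self[OF p0] fp
    by (simp add: omega_def)
  fix r assume r: "(\<forall>v\<in>tangent_space polar (reeb level p). omega v r = 0) \<and> omega (reeb level p) r = 1"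
  have D2f_r: "D2f p r u = 0" if u: "Df p u = 0" for u
  proof -
    have "omega (cJ (hess_vec p u)) r = - D2f p r u"
      by (simp add: omega_def cJ_cJ inner_hess_vec p0 inner_commute[of "hess_vec p u"])
    then show ?thesis using r cJ_hess_vec_tangent_space_polar[OF p u] by simp
  qed
  define s where "s = r + p"
  have Df_s: "Df p s = 0"
    using r omega_reeb_level[OF p] linear_add[OF linear_Df[OF p0]] Df_self[OF p0] fp by (simp add: s_def)
  have "D2f p s s = 0"
    using D2f_r[OF Df_s] D2f_self_left[OF p0] by (simp add: s_def D2f_add_left p0)
  then have "s = 0" using D2f_pos[OF fp _ Df_s] by fastforce
  then show "r = - p" by (simp add: s_def eq_neg_iff_add_eq_0)
qed

lemma level_eq_image_sphere: "level = (\<lambda>z. (1 / f z) *\<^sub>R z) ` sphere 0 1"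
proof
  show "level \<subseteq> (\<lambda>z. (1 / f z) *\<^sub>R z) ` sphere 0 1"
  proof
    fix y assume y: "y \<in> level"
    have y0: "y \<noteq> 0" using level_nonzero y .
    let ?z = "(1 / norm y) *\<^sub>R y"
    have "f ?z = 1 / norm y" using y y0 by (simp add: f_scaleR level_def)
    then have "y = (1 / f ?z) *\<^sub>R ?z" using y0 by simp
    moreover have "?z \<in> sphere 0 1" using y0 by simp
    ultimately show "y \<in> (\<lambda>z. (1 / f z) *\<^sub>R z) ` sphere 0 1" by blast
  qed
  show "(\<lambda>z. (1 / f z) *\<^sub>R z) ` sphere 0 1 \<subseteq> level"
    by (auto intro!: radial_projection_level)
qed

lemma compact_level: "compact level"
proof -
  have "\<forall>z\<in>sphere 0 1. f z \<noteq> 0"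
    using f_pos by (metis less_irrefl mem_sphere_0 norm_zero zero_neq_one)
  then have "continuous_on (sphere 0 1) (\<lambda>z. (1 / f z) *\<^sub>R z)"
    using continuous_on_subset[OF continuous_on_f] by (auto intro!: continuous_intros)
  then show ?thesis
    unfolding level_eq_image_sphere by (rule compact_continuous_image) simp
qed

text \<open>Lagrange multipliers: \<open>q\<close> maximises \<open>(\<bullet>) w\<close> on the compact level set.\<close>
lemma exists_level_grad_multiple:
  assumes w: "w \<noteq> 0"
  obtains q c where "q \<in> level" "c > 0" "w = c *\<^sub>R grad q"
proof -
  have w_level: "(1 / f w) *\<^sub>R w \<in> level" using radial_projection_level w .
  have "\<exists>q\<in>level. \<forall>y\<in>level. w \<bullet> y \<le> w \<bullet> q"
    using w_level by (intro continuous_attains_sup compact_level continuous_intros) auto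
  then obtain q where q: "q \<in> level" and max: "\<And>y. y \<in> level \<Longrightarrow> w \<bullet> y \<le> w \<bullet> q"
    by blast
  have q0: "q \<noteq> 0" using level_nonzero q .
  have "w = (q \<bullet> w) *\<^sub>R grad q"
  proof (rule orthogonal_kernel_imp_multiple)
    show "grad q \<bullet> q = 1"
      using q Df_self[OF q0] by (simp add: inner_commute[of "grad q"] inner_grad q0 level_def)
    fix v assume "grad q \<bullet> v = 0"
    then have "v \<in> tangent_space level q"
      by (simp add: tangent_space_level[OF q] inner_commute[of "grad q"] inner_grad q0)
    then have "(\<lambda>y. - (w \<bullet> y)) v = 0"
      by (rule min_linear_vanishes_on_tangent_space[rotated])
         (auto intro: bounded_linear_minus bounded_linear_inner_right max)
    then show "v \<bullet> w = 0" by (simp add: inner_commute)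
  qed
  moreover have "q \<bullet> w > 0"
  proof -
    have "0 < w \<bullet> ((1 / f w) *\<^sub>R w)" using w f_pos[OF w] by simp
    also have "\<dots> \<le> w \<bullet> q" by (rule max[OF w_level])
    finally show ?thesis by (simp add: inner_commute)
  qed
  ultimately show ?thesis using that q by blast
qed

lemma polar_ray:
  assumes z: "z \<noteq> 0"
  obtains c where "c > 0" "c *\<^sub>R z \<in> polar"
proof -
  obtain q c where q: "q \<in> level" "c > 0" "- cJ z = c *\<^sub>R grad q"
    using exists_level_grad_multiple[of "- cJ z"] z by (auto simp: cJ_eq_0_iff)
  then have "grad q = (1 / c) *\<^sub>R (- cJ z)" by simp
  then have "reeb level q = (1 / c) *\<^sub>R z"
    using reeb_level[OF q(1)] by (simp add: cJ_scaleR cJ_minus cJ_cJ)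
  then have "(1 / c) *\<^sub>R z \<in> polar" unfolding polar_def using q(1) by (metis image_eqI)
  then show ?thesis using that[of "1 / c"] q(2) by simp
qed

lemma inj_on_reeb_level: "inj_on (reeb level) level"
  by (rule inj_on_inverseI[where g = "\<lambda>y. - reeb polar y"]) (simp add: reeb_polar_reeb_level)

end

locale polar_gauge = gauge f for f :: "complex ^ 'd \<Rightarrow> real" +
  fixes fs :: "complex ^ 'd \<Rightarrow> real"
  assumes pos_hom1_fs: "pos_hom1 fs" and level_fs: "{y. fs y = 1} = polar"
begin

lemma polar_scaleR_fs:
  assumes c: "c > 0" "c *\<^sub>R z \<in> polar"
  shows "c * fs z = 1"
proof -
  have "fs (c *\<^sub>R z) = 1" using c(2) by (simp add: level_fs[symmetric])
  then show ?thesis using pos_hom1_fs c(1) unfolding pos_hom1_def by simp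
qed

lemma fs_pos:
  assumes z: "z \<noteq> 0"
  shows "fs z > 0"
proof -
  obtain c where "c > 0" "c *\<^sub>R z \<in> polar" using polar_ray z by blast
  with polar_scaleR_fs have "c * fs z = 1" by blast
  then show ?thesis using \<open>c > 0\<close> by (metis zero_less_mult_pos zero_less_one)
qed

lemma n_plus_level:
  assumes z: "fs z > 0"
  shows "- n_plus level z = reeb polar ((1 / fs z) *\<^sub>R z)"
proof -
  have "fs ((1 / fs z) *\<^sub>R z) = 1" using pos_hom1_fs z unfolding pos_hom1_def by simp
  then have "(1 / fs z) *\<^sub>R z \<in> polar" by (simp add: level_fs[symmetric])
  then obtain p where p: "p \<in> level" "reeb level p = (1 / fs z) *\<^sub>R z"
    unfolding polar_def by auto
  have "n_plus level z = p"
    unfolding n_plus_def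
  proof (rule the_equality)
    show "p \<in> level \<and> pos_prop (reeb level p) z"
      unfolding pos_prop_def using p z by (auto intro!: exI[of _ "1 / fs z"])
    fix p' assume p': "p' \<in> level \<and> pos_prop (reeb level p') z"
    then obtain c where c: "c > 0" "reeb level p' = c *\<^sub>R z" unfolding pos_prop_def by auto
    have "c *\<^sub>R z \<in> polar" unfolding polar_def using p' c(2) by (metis image_eqI)
    then have "c * fs z = 1" by (rule polar_scaleR_fs[OF c(1)])
    then have "reeb level p' = reeb level p" using c p z by (simp add: field_simps)
    then show "p' = p" using inj_onD[OF inj_on_reeb_level] p' p(1) by blast
  qed
  then show ?thesis using reeb_polar_reeb_level[OF p(1)] p(2) by simp
qed

end

theorem lemma2p6:
  fixes f fs :: "complex ^ 'd \<Rightarrow> real" and M :: "(complex ^ 'd) set" and x :: "complex ^ 'd"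
  assumes "qconvex_gauge f"
    and "M = {y. f y = 1}"
    and "pos_hom1 fs"
    and "{y. fs y = 1} = reeb M ` M"
    and "f x > 1" and "fs x > 1"
  shows "- n_plus M x = reeb (reeb M ` M) ((1 / fs x) *\<^sub>R x)
    \<and> - n_minus M x = reeb (reeb M ` M) ((1 / fs (- x)) *\<^sub>R (- x))"
proof -
  interpret gauge f by unfold_locales (rule assms(1))
  have M: "M = level" using assms(2) by (simp add: level_def)
  interpret polar_gauge f fs
    using assms(3,4) by unfold_locales (simp_all add: M polar_def)
  have "x \<noteq> 0" using assms(6) pos_hom1_0[OF assms(3)] by auto
  then have "fs (- x) > 0" using fs_pos by simp
  then show ?thesis
    using n_plus_level assms(6)
    unfolding M n_minus_eq_n_plus_uminus polar_def[symmetric] by simp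
qed

end
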